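(* In every T2R semigroup $S=S_0\cup S_1$, we have $S_0^2=S_0$.
   Context: A semigroup $S$ is a $\Delta$-semigroup if the lattice of all congruences of $S$ is a chain with respect to inclusion. A semigroup $N$ with zero $0$ is nil if every element has some power equal to $0$; non-trivial means having more than one element. A T2R semigroup is a $\Delta$-semigroup $S$ which is the disjoint union of a non-trivial nil ideal $S_0$ (with zero $0$, which is then the zero of $S$) and a subsemigroup $S_1=\{u,v\}$, $u\neq v$, which is a right zero semigroup ($xy=y$ for $x,y\in S_1$). $S_0^2=\{xy:x,y\in S_0\}$. *)

theory Defs
  imports Main
begin

definition semigroup_on :: "'a set \<Rightarrow> ('a \<Rightarrow> 'a \<Rightarrow> 'a) \<Rightarrow> bool" where
  "semigroup_on S m \<longleftrightarrow> (\<forall>x\<in>S. \<forall>y\<in>S. m x y \<in> S) \<and>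
     (\<forall>x\<in>S. \<forall>y\<in>S. \<forall>z\<in>S. m (m x y) z = m x (m y z))"

definition congruence_on :: "'a set \<Rightarrow> ('a \<Rightarrow> 'a \<Rightarrow> 'a) \<Rightarrow> ('a \<times> 'a) set \<Rightarrow> bool" where
  "congruence_on S m \<rho> \<longleftrightarrow> equiv S \<rho> \<and>
     (\<forall>a\<in>S. \<forall>b\<in>S. \<forall>c\<in>S. (a, b) \<in> \<rho> \<longrightarrow> (m c a, m c b) \<in> \<rho> \<and> (m a c, m b c) \<in> \<rho>)"

definition delta_semigroup :: "'a set \<Rightarrow> ('a \<Rightarrow> 'a \<Rightarrow> 'a) \<Rightarrow> bool" where
  "delta_semigroup S m \<longleftrightarrow> semigroup_on S m \<and>
     (\<forall>\<rho> \<sigma>. congruence_on S m \<rho> \<and> congruence_on S m \<sigma> \<longrightarrow> \<rho> \<subseteq> \<sigma> \<or> \<sigma> \<subseteq> \<rho>)"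

text \<open>Positive powers: spow m x n = x^(n+1).\<close>
fun spow :: "('a \<Rightarrow> 'a \<Rightarrow> 'a) \<Rightarrow> 'a \<Rightarrow> nat \<Rightarrow> 'a" where
  "spow m x 0 = x"
| "spow m x (Suc n) = m (spow m x n) x"

definition ideal_on :: "'a set \<Rightarrow> ('a \<Rightarrow> 'a \<Rightarrow> 'a) \<Rightarrow> 'a set \<Rightarrow> bool" where
  "ideal_on S m I \<longleftrightarrow> I \<subseteq> S \<and> I \<noteq> {} \<and> (\<forall>x\<in>S. \<forall>y\<in>I. m x y \<in> I \<and> m y x \<in> I)"

definition nil_with_zero :: "'a set \<Rightarrow> ('a \<Rightarrow> 'a \<Rightarrow> 'a) \<Rightarrow> 'a \<Rightarrow> bool" where
  "nil_with_zero N m z \<longleftrightarrow> z \<in> N \<and> (\<forall>x\<in>N. m x z = z \<and> m z x = z) \<and>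
     (\<forall>x\<in>N. \<exists>n. spow m x n = z)"

definition T2R :: "'a set \<Rightarrow> ('a \<Rightarrow> 'a \<Rightarrow> 'a) \<Rightarrow> 'a set \<Rightarrow> 'a \<Rightarrow> 'a \<Rightarrow> 'a \<Rightarrow> bool" where
  "T2R S m S0 z u v \<longleftrightarrow> delta_semigroup S m \<and>
     S = S0 \<union> {u, v} \<and> S0 \<inter> {u, v} = {} \<and> u \<noteq> v \<and>
     ideal_on S m S0 \<and> nil_with_zero S0 m z \<and> (\<exists>x\<in>S0. x \<noteq> z) \<and>
     (\<forall>x\<in>{u, v}. \<forall>y\<in>{u, v}. m x y = y)"

definition set_square :: "'a set \<Rightarrow> ('a \<Rightarrow> 'a \<Rightarrow> 'a) \<Rightarrow> 'a set" where
  "set_square A m = {m x y | x y. x \<in> A \<and> y \<in> A}"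

end

theory Submission
  imports Defs
begin

text \<open>Suppose \<open>S\<^sub>0\<^sup>2 \<noteq> S\<^sub>0\<close>. For a set \<open>J\<close> with \<open>S\<^sub>0\<^sup>2 \<subseteq> J \<subset> S\<^sub>0\<close> that is closed under right
  multiplication by \<open>u, v\<close> and satisfies \<open>uq \<in> J \<longleftrightarrow> vq \<in> J\<close> for \<open>q \<in> S\<^sub>0\<close>, the syntactic
  congruence of \<open>S\<^sub>0 - J\<close> identifies \<open>u\<close> and \<open>v\<close> but separates two elements of \<open>S\<^sub>0\<close>, so it is
  incomparable with the Rees congruence of \<open>S\<^sub>0\<close>. Such a \<open>J\<close> exists: either
  \<open>S\<^sub>0\<^sup>2 \<union> uS\<^sub>0 \<union> vS\<^sub>0\<close> is proper, or it is all of \<open>S\<^sub>0\<close>, and then \<open>u\<close> and \<open>v\<close> act as the identity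
  on \<open>S\<^sub>0 - S\<^sub>0\<^sup>2\<close>, so \<open>J = S\<^sub>0\<^sup>2\<close> works.\<close>

definition rees_congruence :: "'a set \<Rightarrow> 'a set \<Rightarrow> ('a \<times> 'a) set" where
  "rees_congruence S I = {(x, y). x \<in> S \<and> y \<in> S \<and> (x = y \<or> x \<in> I \<and> y \<in> I)}"

text \<open>The largest congruence saturating \<open>P\<close>: the contexts \<open>p _ q\<close> with \<open>p, q \<in> S\<^sup>1\<close> are
  spelled out case by case.\<close>
definition syntactic_congruence ::
    "'a set \<Rightarrow> ('a \<Rightarrow> 'a \<Rightarrow> 'a) \<Rightarrow> 'a set \<Rightarrow> ('a \<times> 'a) set" where
  "syntactic_congruence S m P = {(x, y). x \<in> S \<and> y \<in> S \<and> (x \<in> P \<longleftrightarrow> y \<in> P) \<and>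
     (\<forall>p\<in>S. m p x \<in> P \<longleftrightarrow> m p y \<in> P) \<and> (\<forall>q\<in>S. m x q \<in> P \<longleftrightarrow> m y q \<in> P) \<and>
     (\<forall>p\<in>S. \<forall>q\<in>S. m p (m x q) \<in> P \<longleftrightarrow> m p (m y q) \<in> P)}"

lemma congruence_on_rees_congruence:
  assumes "semigroup_on S m" and "ideal_on S m I"
  shows "congruence_on S m (rees_congruence S I)"
  using assms unfolding semigroup_on_def congruence_on_def ideal_on_def rees_congruence_def
  by (auto simp: equiv_def refl_on_def sym_def trans_def)

lemma congruence_on_syntactic_congruence:
  assumes "semigroup_on S m"
  shows "congruence_on S m (syntactic_congruence S m P)"
  unfolding congruence_on_def
proof (intro conjI ballI impI)
  have closed: "\<And>x y. x \<in> S \<Longrightarrow> y \<in> S \<Longrightarrow> m x y \<in> S"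
    and assoc: "\<And>x y w. x \<in> S \<Longrightarrow> y \<in> S \<Longrightarrow> w \<in> S \<Longrightarrow> m (m x y) w = m x (m y w)"
    using assms unfolding semigroup_on_def by simp_all
  show "equiv S (syntactic_congruence S m P)"
    unfolding equiv_def refl_on_def sym_def trans_def syntactic_congruence_def by auto
  fix a b c
  assume abc: "a \<in> S" "b \<in> S" "c \<in> S" and ab: "(a, b) \<in> syntactic_congruence S m P"
  have left: "\<And>p. p \<in> S \<Longrightarrow> m p a \<in> P \<longleftrightarrow> m p b \<in> P"
    and right: "\<And>q. q \<in> S \<Longrightarrow> m a q \<in> P \<longleftrightarrow> m b q \<in> P"
    and both: "\<And>p q. p \<in> S \<Longrightarrow> q \<in> S \<Longrightarrow> m p (m a q) \<in> P \<longleftrightarrow> m p (m b q) \<in> P"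
    using ab unfolding syntactic_congruence_def by blast+
  show "(m c a, m c b) \<in> syntactic_congruence S m P"
    unfolding syntactic_congruence_def
  proof (simp, intro conjI ballI)
    show "m c a \<in> S" "m c b \<in> S" "(m c a \<in> P) = (m c b \<in> P)"
      using closed abc left by auto
  next
    fix p assume "p \<in> S"
    then show "(m p (m c a) \<in> P) = (m p (m c b) \<in> P)"
      using left[of "m p c"] closed assoc abc by auto
  next
    fix q assume "q \<in> S"
    then show "(m (m c a) q \<in> P) = (m (m c b) q \<in> P)"
      using both[of c q] closed assoc abc by auto
  next
    fix p q assume "p \<in> S" "q \<in> S"
    then show "(m p (m (m c a) q) \<in> P) = (m p (m (m c b) q) \<in> P)"
      using both[of "m p c" q] closed assoc abc by auto
  qed
  show "(m a c, m b c) \<in> syntactic_congruence S m P"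
    unfolding syntactic_congruence_def
  proof (simp, intro conjI ballI)
    show "m a c \<in> S" "m b c \<in> S" "(m a c \<in> P) = (m b c \<in> P)"
      using closed abc right by auto
  next
    fix p assume "p \<in> S"
    then show "(m p (m a c) \<in> P) = (m p (m b c) \<in> P)"
      using both[of p c] closed assoc abc by auto
  next
    fix q assume "q \<in> S"
    then show "(m (m a c) q \<in> P) = (m (m b c) q \<in> P)"
      using right[of "m c q"] closed assoc abc by auto
  next
    fix p q assume "p \<in> S" "q \<in> S"
    then show "(m p (m (m a c) q) \<in> P) = (m p (m (m b c) q) \<in> P)"
      using both[of p "m c q"] closed assoc abc by auto
  qed
qed

lemma syntactic_congruence_subset_rees_congruence:
  assumes "delta_semigroup S m" and "ideal_on S m I"
    and "a \<in> I" "a \<in> P" "b \<in> I" "b \<notin> P"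
  shows "syntactic_congruence S m P \<subseteq> rees_congruence S I"
proof -
  have "semigroup_on S m" using assms(1) unfolding delta_semigroup_def by simp
  then have "congruence_on S m (syntactic_congruence S m P)"
    and "congruence_on S m (rees_congruence S I)"
    using congruence_on_syntactic_congruence congruence_on_rees_congruence assms(2) by blast+
  moreover have "(a, b) \<in> rees_congruence S I - syntactic_congruence S m P"
    using assms(2-6) unfolding ideal_on_def rees_congruence_def syntactic_congruence_def
    by auto
  ultimately show ?thesis
    using assms(1) unfolding delta_semigroup_def by blast
qed

lemma ideal_on_set_square:
  assumes "semigroup_on S m" and "ideal_on S m I"
  shows "ideal_on S m (set_square I m)" and "set_square I m \<subseteq> I"
proof -
  have closed: "\<And>x y. x \<in> S \<Longrightarrow> y \<in> S \<Longrightarrow> m x y \<in> S"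
    and assoc: "\<And>x y w. x \<in> S \<Longrightarrow> y \<in> S \<Longrightarrow> w \<in> S \<Longrightarrow> m (m x y) w = m x (m y w)"
    using assms(1) unfolding semigroup_on_def by simp_all
  have I: "I \<subseteq> S" "I \<noteq> {}" "\<And>x y. x \<in> S \<Longrightarrow> y \<in> I \<Longrightarrow> m x y \<in> I \<and> m y x \<in> I"
    using assms(2) unfolding ideal_on_def by blast+
  show "set_square I m \<subseteq> I"
    unfolding set_square_def using I by blast
  moreover have "set_square I m \<noteq> {}"
    unfolding set_square_def using I(2) by blast
  moreover have "m x y \<in> set_square I m" "m y x \<in> set_square I m"
    if x: "x \<in> S" and y: "y \<in> set_square I m" for x y
  proof -
    obtain a b where ab: "y = m a b" "a \<in> I" "b \<in> I"
      using y unfolding set_square_def by blast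
    then have "a \<in> S" "b \<in> S" using I(1) by blast+
    then have "m x y = m (m x a) b" "m y x = m a (m b x)" "m x a \<in> I" "m b x \<in> I"
      using assoc[of x a b] assoc[of a b x] I(3) ab x by simp_all
    then show "m x y \<in> set_square I m" "m y x \<in> set_square I m"
      unfolding set_square_def using \<open>a \<in> I\<close> \<open>b \<in> I\<close> by blast+
  qed
  ultimately show "ideal_on S m (set_square I m)"
    unfolding ideal_on_def using I(1) by blast
qed

locale T2R_semigroup =
  fixes S S0 :: "'a set" and m :: "'a \<Rightarrow> 'a \<Rightarrow> 'a" and z u v :: 'a
  assumes T2R: "T2R S m S0 z u v"
begin

lemma delta: "delta_semigroup S m"
  and semigroup: "semigroup_on S m"
  and ideal: "ideal_on S m S0"
  and S_eq: "S = S0 \<union> {u, v}"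
  and u_notin: "u \<notin> S0" and v_notin: "v \<notin> S0" and u_neq_v: "u \<noteq> v"
  and right_zero: "\<And>s t. s \<in> {u, v} \<Longrightarrow> t \<in> {u, v} \<Longrightarrow> m s t = t"
  using T2R unfolding T2R_def delta_semigroup_def by auto

lemma assoc: "x \<in> S \<Longrightarrow> y \<in> S \<Longrightarrow> w \<in> S \<Longrightarrow> m (m x y) w = m x (m y w)"
  using semigroup unfolding semigroup_on_def by simp

lemma ideal_mult: "x \<in> S \<Longrightarrow> y \<in> S0 \<Longrightarrow> m x y \<in> S0 \<and> m y x \<in> S0"
  using ideal unfolding ideal_on_def by blast

lemma S0_subset: "S0 \<subseteq> S" and u_in: "u \<in> S" and v_in: "v \<in> S"
  using S_eq by auto

lemma absorb_left: "s \<in> {u, v} \<Longrightarrow> t \<in> {u, v} \<Longrightarrow> y \<in> S0 \<Longrightarrow> m s (m t y) = m t y"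
  using assoc[of s t y] right_zero S0_subset u_in v_in by auto

abbreviation square :: "'a set" where
  "square \<equiv> set_square S0 m"

lemma square_ideal: "ideal_on S m square" and square_subset: "square \<subseteq> S0"
  using ideal_on_set_square semigroup ideal by blast+

lemma square_mult: "x \<in> S0 \<Longrightarrow> y \<in> S0 \<Longrightarrow> m x y \<in> square"
  unfolding set_square_def by blast

lemma uv_in_syntactic_congruence:
  assumes "square \<subseteq> J" "J \<subseteq> S0"
    and right_closed: "\<And>x. x \<in> J \<Longrightarrow> m x u \<in> J \<and> m x v \<in> J"
    and balanced: "\<And>q. q \<in> S0 \<Longrightarrow> m u q \<in> J \<longleftrightarrow> m v q \<in> J"
  shows "(u, v) \<in> syntactic_congruence S m (S0 - J)"
proof -
  have left_mult: "m u q \<in> S0 - J \<longleftrightarrow> m v q \<in> S0 - J" if "q \<in> S" for q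
    using that balanced ideal_mult[OF u_in] ideal_mult[OF v_in] right_zero S_eq by auto
  have "m p u \<in> S0 - J \<longleftrightarrow> m p v \<in> S0 - J" if "p \<in> S" for p
  proof (cases "p \<in> S0")
    case True
    have "m p u = m (m p v) u" "m p v = m (m p u) v"
      using assoc that u_in v_in right_zero by simp_all
    then have "m p u \<in> J \<longleftrightarrow> m p v \<in> J"
      using right_closed by metis
    moreover have "m p u \<in> S0" "m p v \<in> S0"
      using ideal_mult True u_in v_in by blast+
    ultimately show ?thesis by blast
  next
    case False
    then show ?thesis using that S_eq right_zero u_notin v_notin by auto
  qed
  moreover have "m p (m u q) \<in> S0 - J \<longleftrightarrow> m p (m v q) \<in> S0 - J" if "p \<in> S" "q \<in> S" for p q
  proof (cases "q \<in> S0")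
    case False
    then show ?thesis using that S_eq right_zero by auto
  next
    case q: True
    show ?thesis
    proof (cases "p \<in> S0")
      case True
      then have "m p (m u q) \<in> J" "m p (m v q) \<in> J"
        using square_mult ideal_mult u_in v_in q assms(1) by blast+
      then show ?thesis by blast
    next
      case False
      then show ?thesis using that q S_eq absorb_left left_mult by auto
    qed
  qed
  ultimately show ?thesis
    unfolding syntactic_congruence_def using left_mult u_in v_in u_notin v_notin by auto
qed

lemma balanced_right_closed_eq_S0:
  assumes "square \<subseteq> J" "J \<subseteq> S0"
    and "\<And>x. x \<in> J \<Longrightarrow> m x u \<in> J \<and> m x v \<in> J"
    and "\<And>q. q \<in> S0 \<Longrightarrow> m u q \<in> J \<longleftrightarrow> m v q \<in> J"
  shows "J = S0"
proof (rule ccontr)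
  assume "J \<noteq> S0"
  then obtain a where "a \<in> S0 - J" using assms(2) by blast
  moreover obtain b where "b \<in> square"
    using square_ideal unfolding ideal_on_def by blast
  ultimately have "syntactic_congruence S m (S0 - J) \<subseteq> rees_congruence S S0"
    using syntactic_congruence_subset_rees_congruence[OF delta ideal] square_subset assms(1)
    by blast
  moreover have "(u, v) \<notin> rees_congruence S S0"
    unfolding rees_congruence_def using u_notin u_neq_v by blast
  ultimately show False
    using uv_in_syntactic_congruence[OF assms] by blast
qed

lemma square_eq: "square = S0"
proof -
  define J where "J = square \<union> m u ` S0 \<union> m v ` S0"
  have "J = S0"
  proof (rule balanced_right_closed_eq_S0)
    show "square \<subseteq> J" "J \<subseteq> S0"
      unfolding J_def using square_subset ideal_mult u_in v_in by auto
    show "m u q \<in> J \<longleftrightarrow> m v q \<in> J" if "q \<in> S0" for q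
      unfolding J_def using that by blast
    show "m x u \<in> J \<and> m x v \<in> J" if "x \<in> J" for x
    proof (cases "x \<in> square")
      case True
      then have "m x u \<in> square" "m x v \<in> square"
        using square_ideal u_in v_in unfolding ideal_on_def by blast+
      then show ?thesis unfolding J_def by blast
    next
      case False
      then have "x \<in> m u ` S0 \<or> x \<in> m v ` S0" using that unfolding J_def by blast
      then obtain s y where s: "s \<in> {u, v}" and y: "y \<in> S0" and x: "x = m s y"
        by blast
      have "m x t \<in> J" if t: "t \<in> {u, v}" for t
      proof -
        have "t \<in> S" "s \<in> S" "y \<in> S" using t s y S0_subset u_in v_in by auto
        then have "m x t = m s (m y t)" and "m y t \<in> S0"
          using x assoc[of s y t] ideal_mult[of t y] y by simp_all
        then have "m x t \<in> m s ` S0" by blast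
        then show ?thesis unfolding J_def using s by auto
      qed
      then show ?thesis by blast
    qed
  qed
  show ?thesis
  proof (rule balanced_right_closed_eq_S0)
    show "square \<subseteq> square" "square \<subseteq> S0" by (fact order_refl, fact square_subset)
    show "m x u \<in> square \<and> m x v \<in> square" if "x \<in> square" for x
      using that square_ideal u_in v_in unfolding ideal_on_def by blast
    show "m u q \<in> square \<longleftrightarrow> m v q \<in> square" if "q \<in> S0" for q
    proof -
      have "q \<in> J" using that \<open>J = S0\<close> by blast
      then show ?thesis
        unfolding J_def using square_ideal u_in v_in absorb_left unfolding ideal_on_def by auto
    qed
  qed
qed

end

theorem proposition7:
  fixes S S0 :: "'a set" and m :: "'a \<Rightarrow> 'a \<Rightarrow> 'a" and z u v :: 'a
  assumes "T2R S m S0 z u v"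
  shows "set_square S0 m = S0"
proof -
  interpret T2R_semigroup S S0 m z u v
    using assms by unfold_locales
  show ?thesis by (fact square_eq)
qed

end
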